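(* Assume $m_y=0$ and let $\Pi=\{\pi\ge 0: B_2^\intercal\pi\le c_2^\intercal\}$. For a given $x\in\mathcal X$, consider the bilinear program $\max\{(d-B_1x-Eu)^\intercal\pi:\ u\in\mathcal U(x),\ \pi\in\Pi\}$. When it has a finite optimal value, there exists an optimal solution $(u^*,\pi^* )$ with $\pi^*$ an extreme point of $\Pi$. When it is unbounded, there exist $u^*\in\mathcal U(x)$ and an extreme ray $\gamma^*$ of $\Pi$ such that $(d-B_1x-Eu^* )^\intercal\gamma^*>0$.
   Context: Let $\mathcal X=\{x\in\mathbb Z^{m_x}_+\times\mathbb R^{n_x}_+: Ax\ge b\}$, $\mathcal U(x)=\{u\in\mathbb Z^{m_u}_+\times\mathbb R^{n_u}_+: F(x)u\le h+Gx\}$ ($F(x)$ a matrix depending on $x$), and recourse set $\mathcal Y(x,u)=\{y\in\mathbb R^{n_y}_+: B_2y\ge d-B_1x-Eu\}$ with cost row vector $c_2$. Standing assumptions: (A1) $\mathcal U(x)\ne\emptyset$ for all $x\in\mathcal X$; (A2) $\mathcal U(x)$ is bounded for all $x\in\mathcal X$; (A3) $\min\{c_1x+c_2y: x\in\mathcal X,u\in\mathcal U(x),y\in\mathcal Y(x,u)\}$ has a finite optimal value. *)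

theory Defs
  imports "HOL-Analysis.Analysis"
begin

text \<open>Mixed-integer nonnegative vectors: all components nonnegative, components
  indexed by I integral (I plays the role of the first m coordinates in Z^m_+ x R^n_+).\<close>
definition mixed_int_nonneg :: "'n set \<Rightarrow> real^'n \<Rightarrow> bool" where
  "mixed_int_nonneg I v \<longleftrightarrow> (\<forall>i. 0 \<le> v $ i) \<and> (\<forall>i\<in>I. v $ i \<in> \<int>)"

definition rec_cone :: "'a::real_vector set \<Rightarrow> 'a set" where
  "rec_cone S = {g. \<forall>p\<in>S. \<forall>t::real. 0 \<le> t \<longrightarrow> p + t *\<^sub>R g \<in> S}"

definition extreme_ray_of :: "'a::real_vector \<Rightarrow> 'a set \<Rightarrow> bool" (infixr "extreme'_ray'_of" 50) where
  "g extreme_ray_of S \<longleftrightarrow> g \<noteq> 0 \<and> g \<in> rec_cone S \<and>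
     {t *\<^sub>R g | t::real. 0 \<le> t} face_of rec_cone S"

end

theory Submission
  imports Defs
begin

text \<open>For fixed \<open>u\<close> the inner problem is a linear program over \<open>\<Pi>\<close>, a polyhedron inside the
  nonnegative orthant and hence free of lines. In a line-free polyhedron, a linear objective
  either increases along some ray, or its value at any point is dominated by its value at an
  extreme point: from a non-extreme point move along a segment through it, in the direction
  in which the objective does not decrease, until the relative boundary is reached; there a facet
  is met and induction on the dimension applies.

  If the bilinear program is bounded, no improving ray exists, so the maximum is attained on the
  compact set \<open>\<U>(x)\<close> times the finitely many extreme points of \<open>\<Pi>\<close>. If it is unbounded, some
  \<open>u\<close> has an improving recession direction. Slicing the recession cone by the hyperplane where
  the coordinates sum to one gives a polytope whose extreme points span extreme rays of the
  cone, and the extreme point found by the argument above for this polytope gives an improving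
  extreme ray.\<close>

definition line_free :: "'a::real_vector set \<Rightarrow> bool" where
  "line_free S \<longleftrightarrow> (\<forall>p v. (\<forall>t. p + t *\<^sub>R v \<in> S) \<longrightarrow> v = 0)"

definition nonneg_orthant :: "(real^'n) set" where
  "nonneg_orthant = {x. \<forall>i. 0 \<le> x $ i}"

lemma line_free_subset: "line_free T \<Longrightarrow> S \<subseteq> T \<Longrightarrow> line_free S"
  unfolding line_free_def by blast

lemma slope_nonpos_if_bounded_on_ray:
  fixes \<alpha> \<beta> \<gamma> :: real
  assumes "\<forall>t\<ge>0. \<alpha> + t * \<beta> \<le> \<gamma>"
  shows "\<beta> \<le> 0"
proof (rule ccontr)
  assume "\<not> \<beta> \<le> 0"
  define t where "t = (\<bar>\<gamma> - \<alpha>\<bar> + 1) / \<beta>"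
  have "0 \<le> t" "t * \<beta> = \<bar>\<gamma> - \<alpha>\<bar> + 1"
    using \<open>\<not> \<beta> \<le> 0\<close> by (simp_all add: t_def)
  moreover have "\<alpha> + t * \<beta> \<le> \<gamma>"
    using assms \<open>0 \<le> t\<close> by blast
  ultimately show False by linarith
qed

lemma ray_in_halfspace_imp_inner_nonpos:
  assumes "\<forall>t\<ge>0. a \<bullet> (p + t *\<^sub>R s) \<le> \<beta>"
  shows "a \<bullet> s \<le> 0"
  using assms by (intro slope_nonpos_if_bounded_on_ray[of "a \<bullet> p" _ \<beta>]) (simp add: inner_add_right)

lemma ray_in_bounded_eq_0:
  fixes S :: "'a::real_normed_vector set"
  assumes "bounded S" and ray: "\<forall>t\<ge>0. p + t *\<^sub>R s \<in> S"
  shows "s = 0"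
proof -
  obtain B where B: "\<And>x. x \<in> S \<Longrightarrow> norm x \<le> B"
    using assms(1) by (auto simp: bounded_pos)
  have "0 + t * norm s \<le> B + norm p" if "0 \<le> t" for t
  proof -
    have "t * norm s = norm ((p + t *\<^sub>R s) - p)"
      using that by simp
    also have "\<dots> \<le> norm (p + t *\<^sub>R s) + norm p"
      by (rule norm_triangle_ineq4)
    also have "\<dots> \<le> B + norm p"
      using B ray that by simp
    finally show ?thesis by simp
  qed
  then have "norm s \<le> 0"
    by (intro slope_nonpos_if_bounded_on_ray) blast
  then show ?thesis by simp
qed

lemma bounded_imp_line_free:
  fixes S :: "'a::real_normed_vector set"
  assumes "bounded S"
  shows "line_free S"
  unfolding line_free_def
proof (intro allI impI)
  fix p v
  assume "\<forall>t. p + t *\<^sub>R v \<in> S"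
  then show "v = 0"
    using ray_in_bounded_eq_0[OF assms] by blast
qed

lemma line_free_nonneg_orthant: "line_free nonneg_orthant"
  unfolding line_free_def nonneg_orthant_def
proof (intro allI impI)
  fix p v :: "real^'n"
  assume line: "\<forall>t. p + t *\<^sub>R v \<in> {x. \<forall>i. 0 \<le> x $ i}"
  have "v $ i = 0" for i
  proof -
    have nonneg: "0 \<le> p $ i + t * v $ i" for t
      using line by simp
    have "- p $ i + t * (- v $ i) \<le> 0" "- p $ i + t * v $ i \<le> 0" for t
      using nonneg[of t] nonneg[of "-t"] by simp_all
    then have "- v $ i \<le> 0" "v $ i \<le> 0"
      by (intro slope_nonpos_if_bounded_on_ray[of "- p $ i" _ 0]; blast)+
    then show ?thesis by linarith
  qed
  then show "v = 0" by (simp add: vec_eq_iff)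
qed

lemma ray_leaves_through_rel_frontier:
  fixes S :: "'a::euclidean_space set"
  assumes "closed S" "p \<in> S" "p + s \<in> affine hull S" "\<not> (\<forall>t\<ge>0. p + t *\<^sub>R s \<in> S)"
  obtains T where "0 \<le> T" "p + T *\<^sub>R s \<in> rel_frontier S"
proof -
  obtain t1 where t1: "0 \<le> t1" "p + t1 *\<^sub>R s \<notin> S" using assms(4) by blast
  define K where "K = {0..t1} \<inter> (\<lambda>t. p + t *\<^sub>R s) -` S"
  have "compact K"
    unfolding K_def
    by (intro compact_Int_closed compact_Icc continuous_closed_vimage assms(1)) (auto intro!: continuous_intros)
  moreover have "0 \<in> K" using t1 assms(2) by (simp add: K_def)
  ultimately obtain T where "T \<in> K" and T_max: "\<And>t. t \<in> K \<Longrightarrow> t \<le> T"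
    by (metis compact_attains_sup empty_iff)
  then have T: "0 \<le> T" "T \<le> t1" "p + T *\<^sub>R s \<in> S"
    by (auto simp: K_def)
  with t1 have "T < t1"
    by (metis order_le_less)
  have aff: "p + t *\<^sub>R s \<in> affine hull S" for t
    using mem_affine[OF affine_affine_hull hull_inc[OF assms(2)] assms(3), of "1 - t" t]
    by (simp add: algebra_simps)
  have "p + T *\<^sub>R s \<notin> rel_interior S"
  proof
    assume "p + T *\<^sub>R s \<in> rel_interior S"
    then obtain e where e: "0 < e" "cball (p + T *\<^sub>R s) e \<inter> affine hull S \<subseteq> S"
      by (auto simp: mem_rel_interior_cball)
    have "s \<noteq> 0" using t1 assms(2) by auto
    define l where "l = min (e / norm s) (t1 - T)"
    have l: "0 < l" "l \<le> t1 - T" "l * norm s \<le> e"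
      using e(1) \<open>T < t1\<close> \<open>s \<noteq> 0\<close> by (auto simp: l_def min_def field_simps)
    have "dist (p + T *\<^sub>R s) (p + (T + l) *\<^sub>R s) = l * norm s"
      using l(1) by (simp add: dist_norm scaleR_add_left)
    with l(3) e(2) aff have "p + (T + l) *\<^sub>R s \<in> S"
      by auto
    with T(1) l(1,2) have "T + l \<in> K"
      by (simp add: K_def)
    with T_max l(1) show False
      by (metis add_le_same_cancel1 not_le)
  qed
  with T(3) have "p + T *\<^sub>R s \<in> rel_frontier S"
    using closure_subset by (auto simp: rel_frontier_def)
  with T(1) show thesis by (rule that)
qed

lemma exit_direction_or_improving_ray:
  fixes P :: "'a::real_inner set"
  assumes "line_free P" "p \<in> P" "v \<noteq> 0"
    and "p + v \<in> affine hull P" "p - v \<in> affine hull P"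
  obtains (exit) s where "0 \<le> f \<bullet> s" "p + s \<in> affine hull P" "\<not> (\<forall>t\<ge>0. p + t *\<^sub>R s \<in> P)"
    | (improving_ray) s where "\<forall>t\<ge>0. p + t *\<^sub>R s \<in> P" "0 < f \<bullet> s"
proof -
  have *: thesis if u: "0 \<le> f \<bullet> u" "u \<noteq> 0" "p + u \<in> affine hull P" "p - u \<in> affine hull P" for u
  proof (cases "\<forall>t\<ge>0. p + t *\<^sub>R u \<in> P")
    case False
    with u show thesis by (intro exit)
  next
    case stays: True
    show thesis
    proof (cases "0 < f \<bullet> u")
      case True
      with stays show thesis by (rule improving_ray)
    next
      case False
      have "\<not> (\<forall>t\<ge>0. p + t *\<^sub>R (- u) \<in> P)"
      proof
        assume "\<forall>t\<ge>0. p + t *\<^sub>R (- u) \<in> P"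
        with stays have "\<forall>t. p + t *\<^sub>R u \<in> P"
          by (metis add.inverse_inverse linear neg_0_le_iff_le scaleR_minus_left scaleR_minus_right)
        with assms(1) u(2) show False
          by (auto simp: line_free_def)
      qed
      moreover have "0 \<le> f \<bullet> (- u)" "p + (- u) \<in> affine hull P"
        using False u by auto
      ultimately show thesis by (intro exit)
    qed
  qed
  show thesis
  proof (cases "0 \<le> f \<bullet> v")
    case True
    from True assms(3-5) show thesis by (rule *)
  next
    case False
    with assms(3-5) show thesis by (intro *[of "- v"]) auto
  qed
qed

lemma rel_frontier_polyhedron_in_lower_dim_face:
  fixes P :: "'a::euclidean_space set"
  assumes "polyhedron P" "z \<in> rel_frontier P"
  obtains G where "G face_of P" "z \<in> G" "polyhedron G" "nat (aff_dim G) < nat (aff_dim P)"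
proof -
  obtain G where G: "G facet_of P" "z \<in> G"
    using assms rel_frontier_of_polyhedron by blast
  then have "G face_of P" "polyhedron G"
    using assms(1) facet_of_imp_face_of face_of_polyhedron_polyhedron by blast+
  moreover have "nat (aff_dim G) < nat (aff_dim P)"
    using G aff_dim_empty[of G] aff_dim_geq[of G] by (auto simp: facet_of_def)
  ultimately show thesis
    using G(2) that by blast
qed

lemma polyhedron_extreme_point_or_improving_ray:
  fixes P :: "'a::euclidean_space set"
  assumes "polyhedron P" "line_free P" "\<pi> \<in> P"
  shows "(\<exists>v. v extreme_point_of P \<and> f \<bullet> \<pi> \<le> f \<bullet> v) \<or>
         (\<exists>p s. (\<forall>t\<ge>0. p + t *\<^sub>R s \<in> P) \<and> 0 < f \<bullet> s)"
  using assms
proof (induction "nat (aff_dim P)" arbitrary: P \<pi> rule: less_induct)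
  case less
  show ?case
  proof (cases "\<pi> extreme_point_of P")
    case True
    then show ?thesis by blast
  next
    case False
    then obtain a b where ab: "a \<in> P" "b \<in> P" "\<pi> \<in> open_segment a b"
      using less.prems(3) by (auto simp: extreme_point_of_def)
    have "b - a \<noteq> 0"
      using ab(3) by auto
    have aff: "\<pi> + (b - a) \<in> affine hull P" "\<pi> - (b - a) \<in> affine hull P"
      using mem_affine_3_minus[OF affine_affine_hull hull_inc hull_inc hull_inc, of \<pi> P b a 1]
        mem_affine_3_minus2[OF affine_affine_hull hull_inc hull_inc hull_inc, of \<pi> P b a 1]
        ab(1,2) less.prems(3) by simp_all
    from less.prems(2,3) \<open>b - a \<noteq> 0\<close> aff show ?thesis
    proof (cases rule: exit_direction_or_improving_ray[where f = f])
      case (exit s)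
      obtain T where "0 \<le> T" and z: "\<pi> + T *\<^sub>R s \<in> rel_frontier P"
        using ray_leaves_through_rel_frontier[OF polyhedron_imp_closed[OF less.prems(1)]
            less.prems(3) exit(2,3)] by blast
      then have "f \<bullet> \<pi> \<le> f \<bullet> (\<pi> + T *\<^sub>R s)"
        using exit(1) by (simp add: inner_add_right)
      obtain G where G: "G face_of P" "\<pi> + T *\<^sub>R s \<in> G" "polyhedron G"
        and "nat (aff_dim G) < nat (aff_dim P)"
        using rel_frontier_polyhedron_in_lower_dim_face[OF less.prems(1) z] by blast
      moreover have "G \<subseteq> P"
        using G(1) by (rule face_of_imp_subset)
      moreover have "line_free G"
        using less.prems(2) \<open>G \<subseteq> P\<close> by (rule line_free_subset)
      ultimately have "(\<exists>v. v extreme_point_of G \<and> f \<bullet> (\<pi> + T *\<^sub>R s) \<le> f \<bullet> v) \<or>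
          (\<exists>p s. (\<forall>t\<ge>0. p + t *\<^sub>R s \<in> G) \<and> 0 < f \<bullet> s)"
        using less.hyps by blast
      then show ?thesis
        using extreme_point_of_face[OF G(1)] \<open>G \<subseteq> P\<close>
          \<open>f \<bullet> \<pi> \<le> f \<bullet> (\<pi> + T *\<^sub>R s)\<close> by (meson order_trans subsetD)
    next
      case (improving_ray s)
      then show ?thesis by blast
    qed
  qed
qed

lemma ray_face_of_cone:
  fixes C :: "'a::euclidean_space set"
  assumes "convex C" "conic C" and pos: "\<And>y. y \<in> C \<Longrightarrow> y \<noteq> 0 \<Longrightarrow> 0 < c \<bullet> y"
    and exposed: "{e} exposed_face_of (C \<inter> {y. c \<bullet> y = 1})"
  shows "{t *\<^sub>R e | t. 0 \<le> t} face_of C"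
proof -
  obtain a \<beta> where supp: "C \<inter> {y. c \<bullet> y = 1} \<subseteq> {y. a \<bullet> y \<le> \<beta>}"
    and e: "{e} = C \<inter> {y. c \<bullet> y = 1} \<inter> {y. a \<bullet> y = \<beta>}"
    using exposed by (auto simp: exposed_face_of_def)
  then have "e \<in> C" "c \<bullet> e = 1" "a \<bullet> e = \<beta>"
    by auto
  have normalize: "(1 / (c \<bullet> y)) *\<^sub>R y \<in> C \<inter> {y. c \<bullet> y = 1}" if "y \<in> C" "y \<noteq> 0" for y
    using pos[OF that] conicD[OF assms(2) that(1), of "1 / (c \<bullet> y)"] by auto
  \<comment> \<open>the exposing functional of the slice, homogenised, supports the whole cone\<close>
  have supporting: "(a - \<beta> *\<^sub>R c) \<bullet> y \<le> 0" if "y \<in> C" for y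
  proof (cases "y = 0")
    case False
    have "a \<bullet> ((1 / (c \<bullet> y)) *\<^sub>R y) \<le> \<beta>"
      using supp normalize[OF that False] by blast
    then have "a \<bullet> y \<le> \<beta> * (c \<bullet> y)"
      using pos[OF that False] by (simp add: field_simps)
    then show ?thesis
      by (simp add: inner_diff_left)
  qed simp
  have "{t *\<^sub>R e | t. 0 \<le> t} = C \<inter> {y. (a - \<beta> *\<^sub>R c) \<bullet> y = 0}"
  proof (intro equalityI subsetI)
    fix y
    assume "y \<in> {t *\<^sub>R e | t. 0 \<le> t}"
    then show "y \<in> C \<inter> {y. (a - \<beta> *\<^sub>R c) \<bullet> y = 0}"
      using conicD[OF assms(2) \<open>e \<in> C\<close>] \<open>c \<bullet> e = 1\<close> \<open>a \<bullet> e = \<beta>\<close>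
      by (auto simp: inner_diff_left)
  next
    fix y
    assume y: "y \<in> C \<inter> {y. (a - \<beta> *\<^sub>R c) \<bullet> y = 0}"
    show "y \<in> {t *\<^sub>R e | t. 0 \<le> t}"
    proof (cases "y = 0")
      case True
      then show ?thesis
        by (metis (mono_tags, lifting) mem_Collect_eq order_refl scaleR_zero_left)
    next
      case False
      with y pos have "0 < c \<bullet> y" "a \<bullet> y = \<beta> * (c \<bullet> y)"
        by (auto simp: inner_diff_left)
      then have "(1 / (c \<bullet> y)) *\<^sub>R y \<in> C \<inter> {y. c \<bullet> y = 1} \<inter> {y. a \<bullet> y = \<beta>}"
        using normalize[OF _ False] y by auto
      then have "(1 / (c \<bullet> y)) *\<^sub>R y = e"
        using e by blast
      then have "y = (c \<bullet> y) *\<^sub>R e"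
        using \<open>0 < c \<bullet> y\<close> by auto
      with \<open>0 < c \<bullet> y\<close> show ?thesis
        by (metis (mono_tags, lifting) less_eq_real_def mem_Collect_eq)
    qed
  qed
  with supporting show ?thesis
    using face_of_Int_supporting_hyperplane_le[OF assms(1), of "a - \<beta> *\<^sub>R c" 0] by simp
qed

lemma inner_one_nonneg_orthant_pos:
  assumes "x \<in> nonneg_orthant" "x \<noteq> 0"
  shows "0 < (\<chi> i. 1) \<bullet> x"
proof -
  have "(\<chi> i. 1) \<bullet> x = (\<Sum>i\<in>UNIV. x $ i)"
    by (simp add: inner_vec_def)
  moreover have "(\<Sum>i\<in>UNIV. x $ i) \<noteq> 0"
    using assms by (auto simp: nonneg_orthant_def sum_nonneg_eq_0_iff vec_eq_iff)
  moreover have "0 \<le> (\<Sum>i\<in>UNIV. x $ i)"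
    using assms(1) by (simp add: nonneg_orthant_def sum_nonneg)
  ultimately show ?thesis by linarith
qed

lemma bounded_nonneg_orthant_slice: "bounded (nonneg_orthant \<inter> {x. (\<chi> i. 1) \<bullet> x = 1})"
  unfolding bounded_iff
proof (intro exI ballI)
  fix x :: "real^'n"
  assume x: "x \<in> nonneg_orthant \<inter> {x. (\<chi> i. 1) \<bullet> x = 1}"
  have "norm x \<le> (\<Sum>i\<in>UNIV. \<bar>x $ i\<bar>)"
    by (rule norm_le_l1_cart)
  also have "\<dots> = (\<chi> i. 1) \<bullet> x"
    using x by (simp add: nonneg_orthant_def inner_vec_def)
  finally show "norm x \<le> 1"
    using x by simp
qed

lemma polyhedral_cone_improving_extreme_ray:
  fixes C :: "(real^'n) set"
  assumes "polyhedron C" "conic C" "C \<subseteq> nonneg_orthant" "s \<in> C" "0 < w \<bullet> s"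
  obtains e where "e \<noteq> 0" "e \<in> C" "{t *\<^sub>R e | t. 0 \<le> t} face_of C" "0 < w \<bullet> e"
proof -
  define one :: "real^'n" where "one = (\<chi> i. 1)"
  define S where "S = C \<inter> {y. one \<bullet> y = 1}"
  have pos: "0 < one \<bullet> y" if "y \<in> C" "y \<noteq> 0" for y
    using inner_one_nonneg_orthant_pos assms(3) that by (auto simp: one_def)
  have "polyhedron S"
    using assms(1) by (simp add: S_def polyhedron_Int polyhedron_hyperplane)
  have "bounded S"
    using assms(3) bounded_nonneg_orthant_slice
    by (rule_tac bounded_subset) (auto simp: S_def one_def)
  have "s \<noteq> 0"
    using assms(5) by auto
  define s' where "s' = (1 / (one \<bullet> s)) *\<^sub>R s"
  have "s' \<in> S" "0 < w \<bullet> s'"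
    using pos[OF assms(4) \<open>s \<noteq> 0\<close>] conicD[OF assms(2,4)] assms(5)
    by (auto simp: S_def s'_def)
  moreover have "\<not> (\<exists>p r. (\<forall>t\<ge>0. p + t *\<^sub>R r \<in> S) \<and> 0 < w \<bullet> r)"
    using ray_in_bounded_eq_0[OF \<open>bounded S\<close>] by fastforce
  ultimately obtain e where e: "e extreme_point_of S" "w \<bullet> s' \<le> w \<bullet> e"
    using polyhedron_extreme_point_or_improving_ray[OF \<open>polyhedron S\<close>
        bounded_imp_line_free[OF \<open>bounded S\<close>] \<open>s' \<in> S\<close>, of w] by blast
  then have "e \<in> C" "one \<bullet> e = 1"
    by (auto simp: S_def extreme_point_of_def)
  moreover have "{e} exposed_face_of S"
    using e(1) \<open>polyhedron S\<close> by (simp add: exposed_face_of_polyhedron face_of_singleton)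
  then have "{t *\<^sub>R e | t. 0 \<le> t} face_of C"
    unfolding S_def
    using ray_face_of_cone[OF polyhedron_imp_convex[OF assms(1)] assms(2) pos] by blast
  moreover have "e \<noteq> 0"
    using \<open>one \<bullet> e = 1\<close> by auto
  ultimately show thesis
    using that e(2) \<open>0 < w \<bullet> s'\<close> by simp
qed

lemma polyhedron_nonneg_le:
  fixes M :: "real^'n^'m"
  shows "polyhedron {x. (\<forall>i. 0 \<le> x $ i) \<and> M *v x \<le> c}"
proof -
  have eq: "{x. (\<forall>i. 0 \<le> x $ i) \<and> M *v x \<le> c} =
      (\<Inter>i. {x. axis i 1 \<bullet> x \<ge> 0}) \<inter> (\<Inter>j. {x. M $ j \<bullet> x \<le> c $ j})"
    by (auto simp: less_eq_vec_def matrix_vector_mul_component inner_axis')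
  show ?thesis
    unfolding eq by (intro polyhedron_Int polyhedron_Inter) (auto intro: polyhedron_halfspace_le polyhedron_halfspace_ge)
qed

lemma ray_direction_nonneg_le:
  fixes M :: "real^'n^'m"
  assumes ray: "\<forall>t\<ge>0. p + t *\<^sub>R s \<in> {x. (\<forall>i. 0 \<le> x $ i) \<and> M *v x \<le> c}"
  shows "(\<forall>i. 0 \<le> s $ i) \<and> M *v s \<le> 0"
proof -
  have "(- axis i 1) \<bullet> (p + t *\<^sub>R s) \<le> 0 \<and> M $ j \<bullet> (p + t *\<^sub>R s) \<le> c $ j" if "0 \<le> t" for i j t
  proof -
    have "0 \<le> (p + t *\<^sub>R s) $ i" "(M *v (p + t *\<^sub>R s)) $ j \<le> c $ j"
      using ray that unfolding less_eq_vec_def by blast+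
    then show ?thesis
      by (simp add: inner_axis' matrix_vector_mul_component)
  qed
  then have "(- axis i 1) \<bullet> s \<le> 0" "M $ j \<bullet> s \<le> 0" for i j
    by (intro ray_in_halfspace_imp_inner_nonpos[of _ p _ 0] ray_in_halfspace_imp_inner_nonpos[of _ p _ "c $ j"]; blast)+
  then show ?thesis
    by (simp add: less_eq_vec_def matrix_vector_mul_component inner_axis')
qed

lemma rec_cone_nonneg_le:
  fixes M :: "real^'n^'m"
  assumes "{x. (\<forall>i. 0 \<le> x $ i) \<and> M *v x \<le> c} \<noteq> {}"
  shows "rec_cone {x. (\<forall>i. 0 \<le> x $ i) \<and> M *v x \<le> c} = {g. (\<forall>i. 0 \<le> g $ i) \<and> M *v g \<le> 0}"
proof (intro equalityI subsetI)
  fix g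
  assume "g \<in> rec_cone {x. (\<forall>i. 0 \<le> x $ i) \<and> M *v x \<le> c}"
  moreover obtain p where "p \<in> {x. (\<forall>i. 0 \<le> x $ i) \<and> M *v x \<le> c}"
    using assms by blast
  ultimately have "\<forall>t\<ge>0. p + t *\<^sub>R g \<in> {x. (\<forall>i. 0 \<le> x $ i) \<and> M *v x \<le> c}"
    unfolding rec_cone_def by blast
  from ray_direction_nonneg_le[OF this] show "g \<in> {g. (\<forall>i. 0 \<le> g $ i) \<and> M *v g \<le> 0}"
    by simp
next
  fix g
  assume "g \<in> {g. (\<forall>i. 0 \<le> g $ i) \<and> M *v g \<le> 0}"
  then have g: "0 \<le> g $ i" "M *v g \<le> 0" for i
    by simp_all
  have "p + t *\<^sub>R g \<in> {x. (\<forall>i. 0 \<le> x $ i) \<and> M *v x \<le> c}"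
    if "p \<in> {x. (\<forall>i. 0 \<le> x $ i) \<and> M *v x \<le> c}" and t: "0 \<le> t" for p t
  proof -
    from that have p: "0 \<le> p $ i" "M *v p \<le> c" for i
      by simp_all
    have "0 \<le> (p + t *\<^sub>R g) $ i" for i
      using p(1)[of i] g(1)[of i] t by simp
    moreover have "t *\<^sub>R (M *v g) \<le> 0"
      using g(2) t by (simp add: less_eq_vec_def mult_nonneg_nonpos)
    with p(2) have "M *v p + t *\<^sub>R (M *v g) \<le> c + 0"
      by (rule add_mono)
    ultimately show ?thesis
      by (simp add: matrix_vector_right_distrib matrix_vector_mult_scaleR)
  qed
  then show "g \<in> rec_cone {x. (\<forall>i. 0 \<le> x $ i) \<and> M *v x \<le> c}"
    unfolding rec_cone_def by blast
qed

lemma conic_nonneg_le_0: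
  fixes M :: "real^'n^'m"
  shows "conic {g. (\<forall>i. 0 \<le> g $ i) \<and> M *v g \<le> 0}"
  unfolding conic_def
proof (intro allI impI)
  fix g and t :: real
  assume "g \<in> {g. (\<forall>i. 0 \<le> g $ i) \<and> M *v g \<le> 0}" "0 \<le> t"
  then show "t *\<^sub>R g \<in> {g. (\<forall>i. 0 \<le> g $ i) \<and> M *v g \<le> 0}"
    by (simp add: less_eq_vec_def matrix_vector_mult_scaleR mult_nonneg_nonpos)
qed

lemma line_free_nonneg_le:
  fixes M :: "real^'n^'m"
  shows "line_free {x. (\<forall>i. 0 \<le> x $ i) \<and> M *v x \<le> c}"
  using line_free_nonneg_orthant by (rule line_free_subset) (auto simp: nonneg_orthant_def)

lemma nonneg_le_improving_extreme_ray:
  fixes M :: "real^'n^'m"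
  assumes ray: "\<forall>t\<ge>0. p + t *\<^sub>R s \<in> {x. (\<forall>i. 0 \<le> x $ i) \<and> M *v x \<le> c}" and "0 < w \<bullet> s"
  shows "\<exists>\<gamma>. \<gamma> extreme_ray_of {x. (\<forall>i. 0 \<le> x $ i) \<and> M *v x \<le> c} \<and> 0 < w \<bullet> \<gamma>"
proof -
  define C where "C = {g. (\<forall>i. 0 \<le> g $ i) \<and> M *v g \<le> 0}"
  have "{x. (\<forall>i. 0 \<le> x $ i) \<and> M *v x \<le> c} \<noteq> {}"
    using ray[rule_format, of 0] by auto
  then have rec: "rec_cone {x. (\<forall>i. 0 \<le> x $ i) \<and> M *v x \<le> c} = C"
    unfolding C_def by (rule rec_cone_nonneg_le)
  have "polyhedron C" "conic C" "C \<subseteq> nonneg_orthant"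
    unfolding C_def by (rule polyhedron_nonneg_le, rule conic_nonneg_le_0, auto simp: nonneg_orthant_def)
  moreover have "s \<in> C"
    using ray_direction_nonneg_le[OF ray] by (simp add: C_def)
  ultimately obtain e where "e \<noteq> 0" "e \<in> C" "{t *\<^sub>R e | t. 0 \<le> t} face_of C" "0 < w \<bullet> e"
    using \<open>0 < w \<bullet> s\<close> by (rule polyhedral_cone_improving_extreme_ray)
  with rec show ?thesis
    unfolding extreme_ray_of_def by blast
qed

lemma closed_mixed_int_nonneg: "closed {v. mixed_int_nonneg I v}"
proof -
  have "{v. mixed_int_nonneg I v} = (\<Inter>i. (\<lambda>v. v $ i) -` {0..}) \<inter> (\<Inter>i\<in>I. (\<lambda>v. v $ i) -` \<int>)"
    by (auto simp: mixed_int_nonneg_def)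
  then show ?thesis
    by (simp add: closed_Int closed_INT closed_vimage_vec_nth)
qed

lemma closed_matrix_le:
  fixes M :: "real^'n^'m"
  shows "closed {x. M *v x \<le> c}"
proof -
  have "{x. M *v x \<le> c} = (\<Inter>j. {x. M $ j \<bullet> x \<le> c $ j})"
    by (auto simp: less_eq_vec_def matrix_vector_mul_component)
  then show ?thesis
    by (simp add: closed_INT closed_halfspace_le)
qed

lemma compact_mixed_int_le:
  fixes M :: "real^'n^'m"
  assumes "bounded {u. mixed_int_nonneg I u \<and> M *v u \<le> c}"
  shows "compact {u. mixed_int_nonneg I u \<and> M *v u \<le> c}"
proof -
  have "closed {u. mixed_int_nonneg I u \<and> M *v u \<le> c}"
    unfolding Collect_conj_eq by (intro closed_Int closed_mixed_int_nonneg closed_matrix_le)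
  with assms show ?thesis
    by (simp add: compact_eq_bounded_closed)
qed

lemma bilinear_max_at_extreme_point:
  fixes w :: "'a::topological_space \<Rightarrow> 'b::euclidean_space"
  assumes "compact U" "U \<noteq> {}" "continuous_on U w" "polyhedron P" "line_free P" "P \<noteq> {}"
    and no_improving_ray: "\<And>u p s. u \<in> U \<Longrightarrow> \<forall>t\<ge>0. p + t *\<^sub>R s \<in> P \<Longrightarrow> w u \<bullet> s \<le> 0"
  shows "\<exists>u\<^sub>s\<in>U. \<exists>v\<^sub>s. v\<^sub>s extreme_point_of P \<and> (\<forall>u\<in>U. \<forall>\<pi>\<in>P. w u \<bullet> \<pi> \<le> w u\<^sub>s \<bullet> v\<^sub>s)"
proof -
  define Ext where "Ext = {v. v extreme_point_of P}"
  have dominated: "\<exists>v\<in>Ext. w u \<bullet> \<pi> \<le> w u \<bullet> v" if "u \<in> U" "\<pi> \<in> P" for u \<pi>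
    using polyhedron_extreme_point_or_improving_ray[OF assms(4,5) that(2), of "w u"]
  proof (elim disjE exE conjE)
    fix p s
    assume "\<forall>t\<ge>0. p + t *\<^sub>R s \<in> P" "0 < w u \<bullet> s"
    with no_improving_ray[OF that(1)] show ?thesis
      by fastforce
  qed (auto simp: Ext_def)
  have "compact (U \<times> Ext)"
    using finite_polyhedron_extreme_points[OF assms(4)]
    by (simp add: Ext_def assms(1) compact_Times finite_imp_compact)
  moreover have "U \<times> Ext \<noteq> {}"
    using dominated assms(2,6) by blast
  moreover have "continuous_on (U \<times> Ext) (\<lambda>z. w (fst z) \<bullet> snd z)"
  proof -
    have "continuous_on (U \<times> Ext) (\<lambda>z. w (fst z))"
      by (rule continuous_on_compose2[OF assms(3) continuous_on_fst[OF continuous_on_id]]) auto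
    then show ?thesis
      by (intro continuous_on_inner continuous_on_snd continuous_on_id)
  qed
  ultimately obtain z where z: "z \<in> U \<times> Ext"
    and z_max: "\<And>z'. z' \<in> U \<times> Ext \<Longrightarrow> w (fst z') \<bullet> snd z' \<le> w (fst z) \<bullet> snd z"
    by (meson continuous_attains_sup)
  show ?thesis
  proof (intro bexI exI conjI ballI)
    show "fst z \<in> U" "snd z extreme_point_of P"
      using z by (auto simp: Ext_def)
    fix u \<pi>
    assume u: "u \<in> U" "\<pi> \<in> P"
    show "w u \<bullet> \<pi> \<le> w (fst z) \<bullet> snd z"
    proof -
      obtain v where "v \<in> Ext" "w u \<bullet> \<pi> \<le> w u \<bullet> v"
        using dominated[OF u] by blast
      moreover have "w u \<bullet> v \<le> w (fst z) \<bullet> snd z"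
        using z_max[of "(u, v)"] \<open>v \<in> Ext\<close> u(1) by simp
      ultimately show ?thesis
        by linarith
    qed
  qed
qed

lemma bilinear_bounded_max_at_extreme_point:
  fixes w :: "'a::topological_space \<Rightarrow> 'b::euclidean_space"
  assumes "compact U" "continuous_on U w" "polyhedron P" "line_free P"
    and "{w u \<bullet> \<pi> | u \<pi>. u \<in> U \<and> \<pi> \<in> P} \<noteq> {}" "bdd_above {w u \<bullet> \<pi> | u \<pi>. u \<in> U \<and> \<pi> \<in> P}"
  shows "\<exists>u\<^sub>s\<in>U. \<exists>v\<^sub>s. v\<^sub>s extreme_point_of P \<and> (\<forall>u\<in>U. \<forall>\<pi>\<in>P. w u \<bullet> \<pi> \<le> w u\<^sub>s \<bullet> v\<^sub>s)"
proof -
  have "U \<noteq> {}" "P \<noteq> {}"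
    using assms(5) by auto
  obtain B where B: "\<And>u \<pi>. u \<in> U \<Longrightarrow> \<pi> \<in> P \<Longrightarrow> w u \<bullet> \<pi> \<le> B"
    using assms(6) unfolding bdd_above_def by blast
  have no_improving_ray: "w u \<bullet> s \<le> 0" if "u \<in> U" "\<forall>t\<ge>0. p + t *\<^sub>R s \<in> P" for u p s
  proof -
    have "\<forall>t\<ge>0. w u \<bullet> (p + t *\<^sub>R s) \<le> B"
      using that B by blast
    then show ?thesis
      by (rule ray_in_halfspace_imp_inner_nonpos)
  qed
  show ?thesis
    by (rule bilinear_max_at_extreme_point[OF assms(1) \<open>U \<noteq> {}\<close> assms(2-4) \<open>P \<noteq> {}\<close> no_improving_ray])
qed

lemma bilinear_unbounded_improving_ray:
  fixes w :: "'a::topological_space \<Rightarrow> 'b::euclidean_space"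
  assumes "compact U" "U \<noteq> {}" "continuous_on U w" "polyhedron P" "line_free P"
    and unbounded: "\<forall>M. \<exists>u\<in>U. \<exists>\<pi>\<in>P. M < w u \<bullet> \<pi>"
  shows "\<exists>u\<in>U. \<exists>p s. (\<forall>t\<ge>0. p + t *\<^sub>R s \<in> P) \<and> 0 < w u \<bullet> s"
proof (rule ccontr)
  assume no_improving_ray: "\<not> ?thesis"
  have "P \<noteq> {}"
    using unbounded by blast
  moreover have "w u \<bullet> s \<le> 0" if "u \<in> U" "\<forall>t\<ge>0. p + t *\<^sub>R s \<in> P" for u p s
  proof -
    from no_improving_ray that have "\<not> 0 < w u \<bullet> s"
      by blast
    then show ?thesis
      by linarith
  qed
  ultimately obtain u\<^sub>s v\<^sub>s where max: "\<forall>u\<in>U. \<forall>\<pi>\<in>P. w u \<bullet> \<pi> \<le> w u\<^sub>s \<bullet> v\<^sub>s"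
    using bilinear_max_at_extreme_point[OF assms(1-5)] by blast
  obtain u \<pi> where "u \<in> U" "\<pi> \<in> P" "w u\<^sub>s \<bullet> v\<^sub>s < w u \<bullet> \<pi>"
    using unbounded[rule_format, of "w u\<^sub>s \<bullet> v\<^sub>s"] by blast
  moreover have "w u \<bullet> \<pi> \<le> w u\<^sub>s \<bullet> v\<^sub>s"
    using max \<open>u \<in> U\<close> \<open>\<pi> \<in> P\<close> by blast
  ultimately show False
    by linarith
qed

theorem corollary3:
  fixes A :: "real^'nx^'q" and b :: "real^'q" and Ix :: "'nx set"
    and F :: "real^'nx \<Rightarrow> real^'nu^'p" and h :: "real^'p" and G :: "real^'nx^'p"
    and Iu :: "'nu set"
    and B2 :: "real^'ny^'r" and d :: "real^'r" and B1 :: "real^'nx^'r" and E :: "real^'nu^'r"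
    and c1 :: "real^'nx" and c2 :: "real^'ny"
    and X :: "(real^'nx) set" and U :: "real^'nx \<Rightarrow> (real^'nu) set"
    and Y :: "real^'nx \<Rightarrow> real^'nu \<Rightarrow> (real^'ny) set"
    and Pi :: "(real^'r) set"
    and x :: "real^'nx"
  assumes X_def: "X = {x. mixed_int_nonneg Ix x \<and> b \<le> A *v x}"
    and U_def: "\<And>x. U x = {u. mixed_int_nonneg Iu u \<and> F x *v u \<le> h + G *v x}"
    and Y_def: "\<And>x u. Y x u = {y. (\<forall>i. 0 \<le> y $ i) \<and> d - B1 *v x - E *v u \<le> B2 *v y}"
    and A1: "\<forall>x\<in>X. U x \<noteq> {}"
    and A2: "\<forall>x\<in>X. bounded (U x)"
    and A3: "{c1 \<bullet> x + c2 \<bullet> y | x u y. x \<in> X \<and> u \<in> U x \<and> y \<in> Y x u} \<noteq> {} \<and>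
             bdd_below {c1 \<bullet> x + c2 \<bullet> y | x u y. x \<in> X \<and> u \<in> U x \<and> y \<in> Y x u}"
    and Pi_def: "Pi = {\<pi>. (\<forall>i. 0 \<le> \<pi> $ i) \<and> transpose B2 *v \<pi> \<le> c2}"
    and x: "x \<in> X"
  shows "(({(d - B1 *v x - E *v u) \<bullet> \<pi> | u \<pi>. u \<in> U x \<and> \<pi> \<in> Pi} \<noteq> {} \<and>
           bdd_above {(d - B1 *v x - E *v u) \<bullet> \<pi> | u \<pi>. u \<in> U x \<and> \<pi> \<in> Pi})
         \<longrightarrow> (\<exists>u\<^sub>s\<in>U x. \<exists>\<pi>\<^sub>s. \<pi>\<^sub>s extreme_point_of Pi \<and>
                (\<forall>u\<in>U x. \<forall>\<pi>\<in>Pi. (d - B1 *v x - E *v u) \<bullet> \<pi> \<le> (d - B1 *v x - E *v u\<^sub>s) \<bullet> \<pi>\<^sub>s)))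
       \<and> ((\<forall>M::real. \<exists>u\<in>U x. \<exists>\<pi>\<in>Pi. (d - B1 *v x - E *v u) \<bullet> \<pi> > M)
         \<longrightarrow> (\<exists>u\<^sub>s\<in>U x. \<exists>\<gamma>. \<gamma> extreme_ray_of Pi \<and> (d - B1 *v x - E *v u\<^sub>s) \<bullet> \<gamma> > 0))"
proof -
  have U: "compact (U x)" "U x \<noteq> {}"
    using compact_mixed_int_le[of Iu "F x" "h + G *v x"] A1 A2 x by (auto simp: U_def)
  have w: "continuous_on (U x) (\<lambda>u. d - B1 *v x - E *v u)"
    by (intro continuous_intros linear_continuous_on matrix_vector_mul_bounded_linear)
  have P: "polyhedron Pi" "line_free Pi"
    unfolding Pi_def by (rule polyhedron_nonneg_le, rule line_free_nonneg_le)
  show ?thesis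
  proof (intro conjI impI)
    assume "{(d - B1 *v x - E *v u) \<bullet> \<pi> | u \<pi>. u \<in> U x \<and> \<pi> \<in> Pi} \<noteq> {} \<and>
            bdd_above {(d - B1 *v x - E *v u) \<bullet> \<pi> | u \<pi>. u \<in> U x \<and> \<pi> \<in> Pi}"
    then show "\<exists>u\<^sub>s\<in>U x. \<exists>\<pi>\<^sub>s. \<pi>\<^sub>s extreme_point_of Pi \<and>
                (\<forall>u\<in>U x. \<forall>\<pi>\<in>Pi. (d - B1 *v x - E *v u) \<bullet> \<pi> \<le> (d - B1 *v x - E *v u\<^sub>s) \<bullet> \<pi>\<^sub>s)"
      using bilinear_bounded_max_at_extreme_point[OF U(1) w P] by blast
  next
    assume "\<forall>M::real. \<exists>u\<in>U x. \<exists>\<pi>\<in>Pi. (d - B1 *v x - E *v u) \<bullet> \<pi> > M"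
    then obtain u p s where "u \<in> U x" "\<forall>t\<ge>0. p + t *\<^sub>R s \<in> Pi" "0 < (d - B1 *v x - E *v u) \<bullet> s"
      using bilinear_unbounded_improving_ray[OF U w P] by blast
    then show "\<exists>u\<^sub>s\<in>U x. \<exists>\<gamma>. \<gamma> extreme_ray_of Pi \<and> (d - B1 *v x - E *v u\<^sub>s) \<bullet> \<gamma> > 0"
      using nonneg_le_improving_extreme_ray[of p s "transpose B2" c2] unfolding Pi_def by blast
  qed
qed

end
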